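(* Let $\mathbb K\in\{\mathbb R,\mathbb C\}$, $\Omega=\mathbb K^{\mathbb Z_+}$, let $\mu=\bigotimes_{n\ge0}\mu_n$ be a product of Borel probability measures $\mu_n$ on $\mathbb K$, and let $\mathbf w=(w_n)_{n\ge1}$ be a sequence of non-zero scalars. Then $\mu$ is $B_{\mathbf w}$-invariant if and only if for every $n\ge1$ and every Borel set $A\subseteq\mathbb K$, $\mu_n(A)=\mu_0(w_1\cdots w_nA)$ (i.e. $\mu_n$ is the image of $\mu_0$ under $t\mapsto t/(w_1\cdots w_n)$).
   Context: $\Omega$ carries the product topology and its Borel $\sigma$-algebra. $B_{\mathbf w}:\Omega\to\Omega$ is defined by $(B_{\mathbf w}t)_j=w_{j+1}t_{j+1}$ for $j\ge0$, where $t=(t_j)_{j\ge0}$. Invariance means $\mu(B_{\mathbf w}^{-1}(B))=\mu(B)$ for all Borel $B\subseteq\Omega$. *)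

theory Defs
  imports "HOL-Probability.Probability"
begin

definition wshift :: "(nat \<Rightarrow> 'a::times) \<Rightarrow> (nat \<Rightarrow> 'a) \<Rightarrow> (nat \<Rightarrow> 'a)" where
  "wshift w t = (\<lambda>j. w (Suc j) * t (Suc j))"

end

theory Submission
  imports Defs
begin

text \<open>
  The image of a product measure under the weighted backward shift is again a product
  measure, whose \<open>j\<close>-th factor is the image of \<open>\<mu>\<^bsub>j+1\<^esub>\<close> under \<open>t \<mapsto> w\<^bsub>j+1\<^esub> t\<close>.
  A product of probability measures determines its factors (they are its marginals),
  so invariance means \<open>\<mu>\<^bsub>j+1\<^esub>(A) = \<mu>\<^bsub>j\<^esub>(w\<^bsub>j+1\<^esub> A)\<close> for all \<open>j\<close>; telescoping
  this chain gives \<open>\<mu>\<^bsub>n\<^esub>(A) = \<mu>\<^bsub>0\<^esub>(w\<^bsub>1\<^esub>\<cdots>w\<^bsub>n\<^esub> A)\<close>.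
\<close>

lemma measurable_shift_map:
  assumes "\<And>i. f i \<in> measurable (M (Suc i)) (N i)"
  shows "(\<lambda>x i. f i (x (Suc i))) \<in> measurable (Pi\<^sub>M UNIV M) (Pi\<^sub>M UNIV N)"
  using assms measurable_space[OF assms]
  by (intro measurable_PiM_single') (auto simp: space_PiM PiE_iff)

lemma distr_PiM_shift_map:
  assumes M: "\<And>i. prob_space (M i)" and f: "\<And>i. f i \<in> measurable (M (Suc i)) (N i)"
  shows "distr (Pi\<^sub>M UNIV M) (Pi\<^sub>M UNIV N) (\<lambda>x i. f i (x (Suc i)))
           = (\<Pi>\<^sub>M i\<in>UNIV. distr (M (Suc i)) (N i) (f i))"
proof -
  let ?S = "\<lambda>x i. f i (x (Suc i))"
  let ?D = "\<lambda>i. distr (M (Suc i)) (N i) (f i)"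
  interpret M: product_prob_space M UNIV
    using M by (rule product_prob_spaceI)
  interpret D: product_prob_space ?D UNIV
    using M f by (intro product_prob_spaceI prob_space.prob_space_distr)
  show ?thesis
  proof (rule D.PiM_eq)
    show "sets (distr (Pi\<^sub>M UNIV M) (Pi\<^sub>M UNIV N) ?S) = sets (Pi\<^sub>M UNIV ?D)"
      by (simp cong: sets_PiM_cong)
  next
    fix J and F :: "nat \<Rightarrow> _" assume J: "finite J" and F: "\<And>j. j \<in> J \<Longrightarrow> F j \<in> sets (?D j)"
    let ?G = "\<lambda>i. f (i - 1) -` F (i - 1) \<inter> space (M i)"
    have G: "?G (Suc j) \<in> sets (M (Suc j))" if "j \<in> J" for j
      using F[OF that] f[of j] by (auto intro: measurable_sets)
    have "prod_emb UNIV ?D J (Pi\<^sub>E J F) \<in> sets (Pi\<^sub>M UNIV ?D)"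
      using F J by (intro sets_PiM_I) auto
    then have box: "prod_emb UNIV ?D J (Pi\<^sub>E J F) \<in> sets (Pi\<^sub>M UNIV N)"
      by (simp cong: sets_PiM_cong)
    have "?S -` prod_emb UNIV ?D J (Pi\<^sub>E J F) \<inter> space (Pi\<^sub>M UNIV M)
        = {x \<in> space (Pi\<^sub>M UNIV M). \<forall>i\<in>Suc ` J. x i \<in> ?G i}"
      using measurable_space[OF f] by (auto simp: prod_emb_def space_PiM PiE_iff)
    then have "emeasure (distr (Pi\<^sub>M UNIV M) (Pi\<^sub>M UNIV N) ?S) (prod_emb UNIV ?D J (Pi\<^sub>E J F))
        = emeasure (Pi\<^sub>M UNIV M) {x \<in> space (Pi\<^sub>M UNIV M). \<forall>i\<in>Suc ` J. x i \<in> ?G i}"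
      using box by (simp add: emeasure_distr measurable_shift_map[of f M N, OF f])
    also have "\<dots> = (\<Prod>i\<in>Suc ` J. emeasure (M i) (?G i))"
      using J G by (intro M.emeasure_PiM_Collect) auto
    also have "\<dots> = (\<Prod>j\<in>J. emeasure (?D j) (F j))"
      using F f by (simp add: prod.reindex emeasure_distr)
    finally show "emeasure (distr (Pi\<^sub>M UNIV M) (Pi\<^sub>M UNIV N) ?S) (prod_emb UNIV ?D J (Pi\<^sub>E J F))
        = (\<Prod>j\<in>J. emeasure (?D j) (F j))" .
  qed
qed

lemma PiM_eq_PiM_iff:
  assumes "\<And>i. i \<in> I \<Longrightarrow> prob_space (M i)" "\<And>i. i \<in> I \<Longrightarrow> prob_space (N i)"
    and "\<And>i. i \<in> I \<Longrightarrow> sets (M i) = sets (N i)"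
  shows "Pi\<^sub>M I M = Pi\<^sub>M I N \<longleftrightarrow> (\<forall>i\<in>I. M i = N i)"
proof
  assume eq: "Pi\<^sub>M I M = Pi\<^sub>M I N"
  show "\<forall>i\<in>I. M i = N i"
  proof
    fix i assume i: "i \<in> I"
    have "M i = distr (Pi\<^sub>M I M) (M i) (\<lambda>x. x i)"
      using assms(1) i by (rule distr_PiM_component[symmetric])
    also have "\<dots> = distr (Pi\<^sub>M I N) (N i) (\<lambda>x. x i)"
      using eq assms(3)[OF i] by (intro distr_cong) auto
    also have "\<dots> = N i"
      using assms(2) i by (rule distr_PiM_component)
    finally show "M i = N i" .
  qed
qed (rule PiM_cong; simp)

lemma distr_eq_iff_emeasure_vimage:
  assumes "f \<in> measurable M M"
  shows "distr M M f = M \<longleftrightarrow> (\<forall>B\<in>sets M. emeasure M (f -` B \<inter> space M) = emeasure M B)"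
  using assms by (metis emeasure_distr measure_eqI sets_distr)

lemma borel_measurable_mult_left:
  "(\<lambda>x. c * x) \<in> borel_measurable (borel :: 'a::real_normed_field measure)"
  by (intro borel_measurable_continuous_onI continuous_intros)

lemma image_mult_left_in_borel:
  fixes c :: "'a::real_normed_field"
  assumes "c \<noteq> 0" "A \<in> sets borel"
  shows "(\<lambda>x. c * x) ` A \<in> sets borel"
proof -
  have "(\<lambda>x. c * x) ` A = (\<lambda>x. inverse c * x) -` A"
    using assms(1) by (force simp: field_simps)
  then show ?thesis
    using measurable_sets_borel[OF borel_measurable_mult_left assms(2)] by simp
qed

lemma distr_mult_left_eq_iff:
  fixes c :: "'a::real_normed_field"
  assumes c: "c \<noteq> 0" and M: "sets M = sets borel" and N: "sets N = sets borel"
  shows "distr M N (\<lambda>x. c * x) = N \<longleftrightarrow> (\<forall>A\<in>sets borel. emeasure M A = emeasure N ((\<lambda>x. c * x) ` A))"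
proof -
  have meas: "(\<lambda>x. c * x) \<in> measurable M N"
    using borel_measurable_mult_left by (simp cong: measurable_cong_sets add: M N)
  have space: "space M = UNIV"
    using sets_eq_imp_space_eq[OF M] by simp
  have vimage_image: "(\<lambda>x. c * x) -` ((\<lambda>x. c * x) ` A) = A" for A
    using c by auto
  have image_vimage: "(\<lambda>x. c * x) ` ((\<lambda>x. c * x) -` B) = B" for B
    using c by (intro surj_image_vimage_eq surjI[where f = "\<lambda>x. inverse c * x"]) simp
  show ?thesis
  proof
    assume eq: "distr M N (\<lambda>x. c * x) = N"
    show "\<forall>A\<in>sets borel. emeasure M A = emeasure N ((\<lambda>x. c * x) ` A)"
    proof
      fix A :: "'a set" assume "A \<in> sets borel"
      then have "(\<lambda>x. c * x) ` A \<in> sets N"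
        using c N image_mult_left_in_borel by simp
      then show "emeasure M A = emeasure N ((\<lambda>x. c * x) ` A)"
        by (subst eq[symmetric]) (simp add: emeasure_distr meas space vimage_image)
    qed
  next
    assume eq: "\<forall>A\<in>sets borel. emeasure M A = emeasure N ((\<lambda>x. c * x) ` A)"
    show "distr M N (\<lambda>x. c * x) = N"
    proof (rule measure_eqI)
      fix B assume "B \<in> sets (distr M N (\<lambda>x. c * x))"
      then have B: "B \<in> sets N" "(\<lambda>x. c * x) -` B \<in> sets borel"
        using measurable_sets[OF meas] by (simp_all add: M space)
      have "emeasure (distr M N (\<lambda>x. c * x)) B = emeasure M ((\<lambda>x. c * x) -` B)"
        using B(1) by (simp add: emeasure_distr meas space)
      also have "\<dots> = emeasure N ((\<lambda>x. c * x) ` ((\<lambda>x. c * x) -` B))"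
        using eq B(2) by blast
      finally show "emeasure (distr M N (\<lambda>x. c * x)) B = emeasure N B"
        by (simp only: image_vimage)
    qed simp
  qed
qed

lemma scaling_chain_iff:
  fixes w :: "nat \<Rightarrow> 'a::real_normed_field" and \<mu> :: "nat \<Rightarrow> 'a set \<Rightarrow> 'b"
  assumes w: "\<And>n. n \<ge> 1 \<Longrightarrow> w n \<noteq> 0"
  shows "(\<forall>j. \<forall>A\<in>sets borel. \<mu> (Suc j) A = \<mu> j ((\<lambda>x. w (Suc j) * x) ` A)) \<longleftrightarrow>
         (\<forall>n\<ge>1. \<forall>A\<in>sets borel. \<mu> n A = \<mu> 0 ((\<lambda>t. (\<Prod>k=1..n. w k) * t) ` A))"
    (is "?chain \<longleftrightarrow> (\<forall>n\<ge>1. ?P n)")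
proof -
  let ?W = "\<lambda>n. \<Prod>k=1..n. w k"
  have image_W_Suc: "(\<lambda>t. ?W n * t) ` (\<lambda>x. w (Suc n) * x) ` A = (\<lambda>t. ?W (Suc n) * t) ` A"
    for n and A :: "'a set"
    by (simp add: image_image prod.nat_ivl_Suc' mult_ac)
  have wA: "(\<lambda>x. w (Suc j) * x) ` A \<in> sets borel" if "A \<in> sets borel" for j and A :: "'a set"
    using w that by (simp add: image_mult_left_in_borel)
  have "?P 0"
    by simp
  then have "(\<forall>n\<ge>1. ?P n) \<longleftrightarrow> (\<forall>n. ?P n)"
    by (metis less_one not_le)
  also have "\<dots> \<longleftrightarrow> ?chain"
  proof
    assume P: "\<forall>n. ?P n"
    show ?chain
    proof (intro allI ballI)
      fix j and A :: "'a set" assume A: "A \<in> sets borel"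
      have "\<mu> (Suc j) A = \<mu> 0 ((\<lambda>t. ?W (Suc j) * t) ` A)"
        using P A by blast
      also have "\<dots> = \<mu> 0 ((\<lambda>t. ?W j * t) ` (\<lambda>x. w (Suc j) * x) ` A)"
        by (simp only: image_W_Suc)
      also have "\<dots> = \<mu> j ((\<lambda>x. w (Suc j) * x) ` A)"
        by (rule P[rule_format, OF wA[OF A], symmetric])
      finally show "\<mu> (Suc j) A = \<mu> j ((\<lambda>x. w (Suc j) * x) ` A)" .
    qed
  next
    assume chain: ?chain
    show "\<forall>n. ?P n"
    proof
      fix n show "?P n"
      proof (induction n)
        case (Suc n)
        show ?case
        proof
          fix A :: "'a set" assume A: "A \<in> sets borel"
          have "\<mu> (Suc n) A = \<mu> n ((\<lambda>x. w (Suc n) * x) ` A)"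
            using chain A by blast
          also have "\<dots> = \<mu> 0 ((\<lambda>t. ?W n * t) ` (\<lambda>x. w (Suc n) * x) ` A)"
            by (rule Suc.IH[rule_format, OF wA[OF A]])
          finally show "\<mu> (Suc n) A = \<mu> 0 ((\<lambda>t. ?W (Suc n) * t) ` A)"
            by (simp only: image_W_Suc)
        qed
      qed simp
    qed
  qed
  finally show ?thesis ..
qed

lemma wshift_invariant_iff:
  fixes M :: "nat \<Rightarrow> 'a::real_normed_field measure" and w :: "nat \<Rightarrow> 'a"
  assumes M: "\<And>n. prob_space (M n)" "\<And>n. sets (M n) = sets borel"
    and w: "\<And>n. n \<ge> 1 \<Longrightarrow> w n \<noteq> 0"
  shows "(\<forall>B\<in>sets (Pi\<^sub>M UNIV M).
            emeasure (Pi\<^sub>M UNIV M) (wshift w -` B \<inter> space (Pi\<^sub>M UNIV M)) = emeasure (Pi\<^sub>M UNIV M) B)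
         \<longleftrightarrow> (\<forall>n\<ge>1. \<forall>A\<in>sets borel. emeasure (M n) A = emeasure (M 0) ((\<lambda>t. (\<Prod>k=1..n. w k) * t) ` A))"
proof -
  let ?scale = "\<lambda>j x. w (Suc j) * x"
  have scale: "?scale j \<in> measurable (M (Suc j)) (M j)" for j
    using borel_measurable_mult_left by (simp cong: measurable_cong_sets add: M(2))
  have shift: "wshift w = (\<lambda>x j. ?scale j (x (Suc j)))"
    by (simp add: wshift_def fun_eq_iff)
  have "(\<forall>B\<in>sets (Pi\<^sub>M UNIV M).
            emeasure (Pi\<^sub>M UNIV M) (wshift w -` B \<inter> space (Pi\<^sub>M UNIV M)) = emeasure (Pi\<^sub>M UNIV M) B)
        \<longleftrightarrow> distr (Pi\<^sub>M UNIV M) (Pi\<^sub>M UNIV M) (wshift w) = Pi\<^sub>M UNIV M"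
    unfolding shift by (rule distr_eq_iff_emeasure_vimage[symmetric, OF measurable_shift_map[of ?scale M M, OF scale]])
  also have "distr (Pi\<^sub>M UNIV M) (Pi\<^sub>M UNIV M) (wshift w) = (\<Pi>\<^sub>M j\<in>UNIV. distr (M (Suc j)) (M j) (?scale j))"
    unfolding shift using M(1) scale by (rule distr_PiM_shift_map)
  also have "\<dots> = Pi\<^sub>M UNIV M \<longleftrightarrow> (\<forall>j. distr (M (Suc j)) (M j) (?scale j) = M j)"
    using M scale by (subst PiM_eq_PiM_iff) (auto intro: prob_space.prob_space_distr)
  also have "\<dots> \<longleftrightarrow> (\<forall>j. \<forall>A\<in>sets borel. emeasure (M (Suc j)) A = emeasure (M j) (?scale j ` A))"
    using M(2) w by (simp add: distr_mult_left_eq_iff)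
  also have "\<dots> \<longleftrightarrow> (\<forall>n\<ge>1. \<forall>A\<in>sets borel. emeasure (M n) A = emeasure (M 0) ((\<lambda>t. (\<Prod>k=1..n. w k) * t) ` A))"
    using w by (rule scaling_chain_iff)
  finally show ?thesis .
qed

theorem lemma5p2:
  shows
  "(\<forall>(M :: nat \<Rightarrow> real measure) (w :: nat \<Rightarrow> real).
      (\<forall>n. prob_space (M n) \<and> sets (M n) = sets borel) \<longrightarrow>
      (\<forall>n\<ge>1. w n \<noteq> 0) \<longrightarrow>
      ((\<forall>B \<in> sets (Pi\<^sub>M UNIV M).
          emeasure (Pi\<^sub>M UNIV M) (wshift w -` B \<inter> space (Pi\<^sub>M UNIV M))
            = emeasure (Pi\<^sub>M UNIV M) B)
       \<longleftrightarrow>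
       (\<forall>n\<ge>1. \<forall>A \<in> sets borel.
          emeasure (M n) A = emeasure (M 0) ((\<lambda>t. (\<Prod>k=1..n. w k) * t) ` A))))
   \<and>
   (\<forall>(M :: nat \<Rightarrow> complex measure) (w :: nat \<Rightarrow> complex).
      (\<forall>n. prob_space (M n) \<and> sets (M n) = sets borel) \<longrightarrow>
      (\<forall>n\<ge>1. w n \<noteq> 0) \<longrightarrow>
      ((\<forall>B \<in> sets (Pi\<^sub>M UNIV M).
          emeasure (Pi\<^sub>M UNIV M) (wshift w -` B \<inter> space (Pi\<^sub>M UNIV M))
            = emeasure (Pi\<^sub>M UNIV M) B)
       \<longleftrightarrow>
       (\<forall>n\<ge>1. \<forall>A \<in> sets borel.
          emeasure (M n) A = emeasure (M 0) ((\<lambda>t. (\<Prod>k=1..n. w k) * t) ` A))))"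
  by (intro conjI allI impI wshift_invariant_iff) auto

end
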